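(* Let $R$ be a unital associative ring and $n\ge1$. Let $\Phi$ and $\Phi^{-1}$ be as defined below and let $\Psi=J_2\circ\Phi\circ J_2$. Then $\Psi$ and $\Phi^{-1}$ have the same domain, each maps this domain bijectively onto ${\rm dom}(\Phi)$, and $\Phi^{-1}(A)\sim\Psi(A)$ for every $A\in{\rm dom}(\Psi)={\rm dom}(\Phi^{-1})$.
   Context: $R^*$: units of $R$. $M_n^*(R)$: invertible $n\times n$ matrices; $M_n^\star(R)$: matrices with all entries in $R^*$. $J_1(M)=M^{-1}$ on $M_n^*(R)$; $J_2(M)_{jk}=(M_{kj})^{-1}$ on $M_n^\star(R)$; $J=J_2\circ J_1$, $J^{-1}=J_1\circ J_2$, where $g\circ f$ has domain $\{x\in{\rm dom}(f):f(x)\in{\rm dom}(g)\}$. $\widehat M_n(R)$: matrices whose first row and column consist of $1$'s. For $A=\{a_{j,k}\}\in M_n^\star(R)$: $\Lambda^L(A)_{j,k}=a_{1,1}a_{j,1}^{-1}a_{j,k}a_{1,k}^{-1}$, $\Lambda^R(A)_{j,k}=a_{j,1}^{-1}a_{j,k}a_{1,k}^{-1}a_{1,1}$. $\Phi(A)=J_2(\Lambda^L(A^{-1}))$ with ${\rm dom}(\Phi)={\rm dom}(J)\cap\widehat M_n(R)\cap M_n^\star(R)$; $\Phi^{-1}(A)=\Lambda^R(J^{-1}(A))$ with domain $\widehat M_n(R)\cap\{M\in{\rm dom}(J^{-1}):J^{-1}(M)\in M_n^\star(R)\}$ (this is the inverse map of $\Phi$). $A\sim B$ means $B=D_1^{-1}AD_2$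 for invertible diagonal $D_1,D_2$. *)

theory Defs
  imports "Jordan_Normal_Form.Matrix"
begin

definition is_unit_r :: "'a::ring_1 \<Rightarrow> bool" where
  "is_unit_r x \<longleftrightarrow> (\<exists>y. x * y = 1 \<and> y * x = 1)"

definition rinv :: "'a::ring_1 \<Rightarrow> 'a" where
  "rinv x = (THE y. x * y = 1 \<and> y * x = 1)"

definition minv :: "nat \<Rightarrow> 'a::ring_1 mat \<Rightarrow> 'a mat" where
  "minv n A = (THE B. B \<in> carrier_mat n n \<and> A * B = 1\<^sub>m n \<and> B * A = 1\<^sub>m n)"

definition inv_mats :: "nat \<Rightarrow> 'a::ring_1 mat set" where
  "inv_mats n = {A \<in> carrier_mat n n. invertible_mat A}"

definition unit_mats :: "nat \<Rightarrow> 'a::ring_1 mat set" where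
  "unit_mats n = {A \<in> carrier_mat n n. \<forall>j<n. \<forall>k<n. is_unit_r (A $$ (j,k))}"

definition hat_mats :: "nat \<Rightarrow> 'a::ring_1 mat set" where
  "hat_mats n = {A \<in> carrier_mat n n. \<forall>j<n. A $$ (0,j) = 1 \<and> A $$ (j,0) = 1}"

text \<open>J_1 on dom J_1 = inv_mats n; J_2 on dom J_2 = unit_mats n.\<close>
definition J1 :: "nat \<Rightarrow> 'a::ring_1 mat \<Rightarrow> 'a mat" where
  "J1 n M = minv n M"

definition J2 :: "nat \<Rightarrow> 'a::ring_1 mat \<Rightarrow> 'a mat" where
  "J2 n M = mat n n (\<lambda>(j,k). rinv (M $$ (k,j)))"

definition J :: "nat \<Rightarrow> 'a::ring_1 mat \<Rightarrow> 'a mat" where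
  "J n M = J2 n (J1 n M)"

definition dom_J :: "nat \<Rightarrow> 'a::ring_1 mat set" where
  "dom_J n = {M \<in> inv_mats n. J1 n M \<in> unit_mats n}"

definition Jinv :: "nat \<Rightarrow> 'a::ring_1 mat \<Rightarrow> 'a mat" where
  "Jinv n M = J1 n (J2 n M)"

definition dom_Jinv :: "nat \<Rightarrow> 'a::ring_1 mat set" where
  "dom_Jinv n = {M \<in> unit_mats n. J2 n M \<in> inv_mats n}"

definition LambdaL :: "nat \<Rightarrow> 'a::ring_1 mat \<Rightarrow> 'a mat" where
  "LambdaL n A = mat n n (\<lambda>(j,k). A $$ (0,0) * rinv (A $$ (j,0)) * A $$ (j,k) * rinv (A $$ (0,k)))"

definition LambdaR :: "nat \<Rightarrow> 'a::ring_1 mat \<Rightarrow> 'a mat" where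
  "LambdaR n A = mat n n (\<lambda>(j,k). rinv (A $$ (j,0)) * A $$ (j,k) * rinv (A $$ (0,k)) * A $$ (0,0))"

definition Phi :: "nat \<Rightarrow> 'a::ring_1 mat \<Rightarrow> 'a mat" where
  "Phi n A = J2 n (LambdaL n (minv n A))"

definition dom_Phi :: "nat \<Rightarrow> 'a::ring_1 mat set" where
  "dom_Phi n = dom_J n \<inter> hat_mats n \<inter> unit_mats n"

definition Phi_inv :: "nat \<Rightarrow> 'a::ring_1 mat \<Rightarrow> 'a mat" where
  "Phi_inv n A = LambdaR n (Jinv n A)"

definition dom_Phi_inv :: "nat \<Rightarrow> 'a::ring_1 mat set" where
  "dom_Phi_inv n = hat_mats n \<inter> {M \<in> dom_Jinv n. Jinv n M \<in> unit_mats n}"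

definition Psi :: "nat \<Rightarrow> 'a::ring_1 mat \<Rightarrow> 'a mat" where
  "Psi n A = J2 n (Phi n (J2 n A))"

definition dom_Psi :: "nat \<Rightarrow> 'a::ring_1 mat set" where
  "dom_Psi n = {A \<in> unit_mats n. J2 n A \<in> dom_Phi n \<and> Phi n (J2 n A) \<in> unit_mats n}"

definition diag_equiv :: "nat \<Rightarrow> 'a::ring_1 mat \<Rightarrow> 'a mat \<Rightarrow> bool" where
  "diag_equiv n A B \<longleftrightarrow> (\<exists>D1 D2. D1 \<in> inv_mats n \<and> D2 \<in> inv_mats n \<and>
      diagonal_mat D1 \<and> diagonal_mat D2 \<and> B = minv n D1 * A * D2)"

end

theory Submission imports Defs begin

text \<open>Both \<open>\<Lambda>\<^sup>L\<close> and \<open>\<Lambda>\<^sup>R\<close> are diagonal rescalings \<open>X \<mapsto> D X D'\<close> normalizing the first row and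
  column to 1. Rescaling commutes with inversion up to inverting and swapping the diagonal factors,
  and normalizing a rescaled normalized matrix gives it back; hence \<open>\<Phi>\<close> and \<open>\<Phi>\<^sup>-\<^sup>1\<close> are mutually
  inverse. \<open>J\<^sub>2\<close> is an involution exchanging \<open>dom \<Phi>\<close> and \<open>dom \<Phi>\<^sup>-\<^sup>1\<close>, so \<open>\<Psi> = J\<^sub>2 \<Phi> J\<^sub>2\<close> is a bijection
  as well. Finally, with \<open>M = (J\<^sub>2 A)\<^sup>-\<^sup>1\<close> one has \<open>\<Psi>(A) = \<Lambda>\<^sup>L(M)\<close> and \<open>\<Phi>\<^sup>-\<^sup>1(A) = \<Lambda>\<^sup>R(M)\<close>, and these
  differ by conjugation with the scalar \<open>M\<^sub>1\<^sub>1\<close>.\<close>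

lemma is_unit_rI: "x * y = 1 \<Longrightarrow> y * x = 1 \<Longrightarrow> is_unit_r (x::'a::ring_1)"
  unfolding is_unit_r_def by blast

lemma rinv_unique:
  fixes x y :: "'a::ring_1"
  assumes "x * y = 1" "y * x = 1"
  shows "rinv x = y"
  unfolding rinv_def
proof (rule the_equality)
  fix z assume z: "x * z = 1 \<and> z * x = 1"
  have "z = y * (x * z)" using assms(2) by (simp flip: mult.assoc)
  with z show "z = y" by simp
qed (use assms in simp)

lemma rinv_inverse:
  assumes "is_unit_r (x::'a::ring_1)"
  shows "x * rinv x = 1" "rinv x * x = 1"
proof -
  obtain y where y: "x * y = 1" "y * x = 1" using assms unfolding is_unit_r_def by blast
  with rinv_unique have "rinv x = y" .
  with y show "x * rinv x = 1" "rinv x * x = 1" by simp_all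
qed

lemma rinv_cancel [simp]:
  assumes "is_unit_r (x::'a::ring_1)"
  shows "x * (rinv x * y) = y" "rinv x * (x * y) = y"
  using rinv_inverse[OF assms] by (simp_all flip: mult.assoc)

lemma rinv_one [simp]: "rinv (1::'a::ring_1) = 1"
  by (rule rinv_unique) simp_all

lemma is_unit_r_rinv [simp]: "is_unit_r x \<Longrightarrow> is_unit_r (rinv (x::'a::ring_1))"
  using rinv_inverse by (blast intro: is_unit_rI)

lemma rinv_rinv [simp]: "is_unit_r x \<Longrightarrow> rinv (rinv (x::'a::ring_1)) = x"
  by (rule rinv_unique) (simp_all add: rinv_inverse)

lemma rinv_mult:
  fixes x y :: "'a::ring_1"
  assumes "is_unit_r x" "is_unit_r y"
  shows "rinv (x * y) = rinv y * rinv x"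
  by (rule rinv_unique) (simp_all add: mult.assoc assms rinv_inverse)

lemma is_unit_r_mult [simp]: "is_unit_r x \<Longrightarrow> is_unit_r y \<Longrightarrow> is_unit_r (x * (y::'a::ring_1))"
  by (rule is_unit_rI[of _ "rinv y * rinv x"]) (simp_all add: mult.assoc rinv_inverse)

lemma rinv_eq_one_iff: "is_unit_r x \<Longrightarrow> rinv x = 1 \<longleftrightarrow> x = (1::'a::ring_1)"
  by (metis rinv_one rinv_rinv)


lemma inv_mats_iff:
  assumes A: "A \<in> carrier_mat n n"
  shows "A \<in> inv_mats n \<longleftrightarrow> (\<exists>B \<in> carrier_mat n n. A * B = 1\<^sub>m n \<and> B * A = 1\<^sub>m n)"
proof
  assume "A \<in> inv_mats n"
  then obtain B where AB: "A * B = 1\<^sub>m n" and BA: "B * A = 1\<^sub>m (dim_row B)"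
    using A unfolding inv_mats_def invertible_mat_def inverts_mat_def by auto
  have "dim_row B = n" using arg_cong[OF BA, of dim_col] A by simp
  moreover have "dim_col B = n" using arg_cong[OF AB, of dim_col] by simp
  ultimately show "\<exists>B \<in> carrier_mat n n. A * B = 1\<^sub>m n \<and> B * A = 1\<^sub>m n"
    using AB BA by auto
next
  assume "\<exists>B \<in> carrier_mat n n. A * B = 1\<^sub>m n \<and> B * A = 1\<^sub>m n"
  then show "A \<in> inv_mats n"
    using A unfolding inv_mats_def invertible_mat_def inverts_mat_def by fastforce
qed

lemma inv_matsI:
  "A \<in> carrier_mat n n \<Longrightarrow> B \<in> carrier_mat n n \<Longrightarrow> A * B = 1\<^sub>m n \<Longrightarrow> B * A = 1\<^sub>m n \<Longrightarrow> A \<in> inv_mats n"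
  using inv_mats_iff by blast

lemma minv_unique:
  assumes A: "A \<in> carrier_mat n n" and B: "B \<in> carrier_mat n n"
    and AB: "A * B = 1\<^sub>m n" and BA: "B * A = 1\<^sub>m n"
  shows "minv n A = B"
  unfolding minv_def
proof (rule the_equality)
  fix C assume "C \<in> carrier_mat n n \<and> A * C = 1\<^sub>m n \<and> C * A = 1\<^sub>m n"
  then have C: "C \<in> carrier_mat n n" and AC: "A * C = 1\<^sub>m n" by simp_all
  have "C = (B * A) * C" using BA left_mult_one_mat[OF C] by simp
  also have "\<dots> = B * (A * C)" using A B C by simp
  finally show "C = B" using AC right_mult_one_mat[OF B] by simp
qed (use assms in simp)

lemma minv_inverse:
  assumes "A \<in> inv_mats n"
  shows "minv n A \<in> carrier_mat n n" "A * minv n A = 1\<^sub>m n" "minv n A * A = 1\<^sub>m n"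
proof -
  have A: "A \<in> carrier_mat n n" using assms unfolding inv_mats_def by simp
  then obtain B where B: "B \<in> carrier_mat n n" "A * B = 1\<^sub>m n" "B * A = 1\<^sub>m n"
    using assms inv_mats_iff by blast
  with minv_unique[OF A] have "minv n A = B" by blast
  with B show "minv n A \<in> carrier_mat n n" "A * minv n A = 1\<^sub>m n" "minv n A * A = 1\<^sub>m n" by simp_all
qed

lemma minv_in_inv_mats: "A \<in> inv_mats n \<Longrightarrow> minv n A \<in> inv_mats n"
  by (rule inv_matsI[of _ _ A]) (auto simp: minv_inverse inv_mats_def)

lemma minv_minv: "A \<in> inv_mats n \<Longrightarrow> minv n (minv n A) = A"
  by (rule minv_unique) (auto simp: minv_inverse inv_mats_def)


definition scale_mat :: "nat \<Rightarrow> (nat \<Rightarrow> 'a) \<Rightarrow> 'a::ring_1 mat \<Rightarrow> (nat \<Rightarrow> 'a) \<Rightarrow> 'a mat" where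
  "scale_mat n u X v = mat n n (\<lambda>(j,k). u j * X $$ (j,k) * v k)"

lemma scale_mat_carrier [simp]: "scale_mat n u X v \<in> carrier_mat n n"
  unfolding scale_mat_def by simp

lemma scale_mat_dim [simp]: "dim_row (scale_mat n u X v) = n" "dim_col (scale_mat n u X v) = n"
  unfolding scale_mat_def by simp_all

lemma scale_mat_index [simp]:
  "j < n \<Longrightarrow> k < n \<Longrightarrow> scale_mat n u X v $$ (j,k) = u j * X $$ (j,k) * v k"
  unfolding scale_mat_def by simp

lemma scale_mat_eq_mat_diag:
  "X \<in> carrier_mat n n \<Longrightarrow> scale_mat n u X v = mat_diag n u * X * mat_diag n v"
  unfolding scale_mat_def
  by (simp add: mat_diag_mult_left, subst mat_diag_mult_right) (auto intro!: eq_matI)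

lemma scale_mat_mult:
  assumes X: "X \<in> carrier_mat n n" and Y: "Y \<in> carrier_mat n n" and v: "\<forall>j<n. v j * v' j = 1"
  shows "scale_mat n u X v * scale_mat n v' Y w = scale_mat n u (X * Y) w"
proof (rule eq_matI)
  fix i k assume "i < dim_row (scale_mat n u (X * Y) w)" "k < dim_col (scale_mat n u (X * Y) w)"
  then have i: "i < n" and k: "k < n" by simp_all
  have "(scale_mat n u X v * scale_mat n v' Y w) $$ (i,k)
      = (\<Sum>j = 0..<n. u i * X $$ (i,j) * v j * (v' j * Y $$ (j,k) * w k))"
    using i k by (simp add: scalar_prod_def)
  also have "\<dots> = (\<Sum>j = 0..<n. u i * (X $$ (i,j) * Y $$ (j,k)) * w k)"
  proof (rule sum.cong)
    fix j assume "j \<in> {0..<n}"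
    then have "v j * (v' j * z) = z" for z using v by (simp flip: mult.assoc)
    then show "u i * X $$ (i,j) * v j * (v' j * Y $$ (j,k) * w k) = u i * (X $$ (i,j) * Y $$ (j,k)) * w k"
      by (simp add: mult.assoc)
  qed simp
  also have "\<dots> = scale_mat n u (X * Y) w $$ (i,k)"
    using i k X Y by (simp add: scalar_prod_def sum_distrib_left sum_distrib_right)
  finally show "(scale_mat n u X v * scale_mat n v' Y w) $$ (i,k) = scale_mat n u (X * Y) w $$ (i,k)" .
qed simp_all

lemma scale_mat_one: "\<forall>i<n. u i * w i = 1 \<Longrightarrow> scale_mat n u (1\<^sub>m n) w = 1\<^sub>m n"
  by (rule eq_matI) auto

lemma scale_mat_inverse:
  assumes X: "X \<in> inv_mats n" and u: "\<forall>j<n. is_unit_r (u j)" and v: "\<forall>j<n. is_unit_r (v j)"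
  shows "scale_mat n u X v \<in> inv_mats n"
    and "minv n (scale_mat n u X v) = scale_mat n (\<lambda>j. rinv (v j)) (minv n X) (\<lambda>j. rinv (u j))"
proof -
  have Xc: "X \<in> carrier_mat n n" using X unfolding inv_mats_def by simp
  note Y = minv_inverse[OF X]
  have l: "scale_mat n u X v * scale_mat n (\<lambda>j. rinv (v j)) (minv n X) (\<lambda>j. rinv (u j)) = 1\<^sub>m n"
    using Xc Y u v by (simp add: scale_mat_mult scale_mat_one rinv_inverse)
  have r: "scale_mat n (\<lambda>j. rinv (v j)) (minv n X) (\<lambda>j. rinv (u j)) * scale_mat n u X v = 1\<^sub>m n"
    using Xc Y u v by (simp add: scale_mat_mult scale_mat_one rinv_inverse)
  show "scale_mat n u X v \<in> inv_mats n" by (rule inv_matsI[OF _ _ l r]) simp_all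
  show "minv n (scale_mat n u X v) = scale_mat n (\<lambda>j. rinv (v j)) (minv n X) (\<lambda>j. rinv (u j))"
    by (rule minv_unique[OF _ _ l r]) simp_all
qed

lemma scale_mat_unit_mats:
  "X \<in> unit_mats n \<Longrightarrow> \<forall>j<n. is_unit_r (u j) \<Longrightarrow> \<forall>j<n. is_unit_r (v j) \<Longrightarrow> scale_mat n u X v \<in> unit_mats n"
  unfolding unit_mats_def by simp

lemma mat_diag_inverse:
  assumes "\<forall>j<n. u j * w j = 1 \<and> w j * u j = 1"
  shows "mat_diag n u \<in> inv_mats n" "minv n (mat_diag n u) = mat_diag n w"
proof -
  have l: "mat_diag n u * mat_diag n w = 1\<^sub>m n" and r: "mat_diag n w * mat_diag n u = 1\<^sub>m n"
    unfolding mat_diag_diag using assms by (auto intro!: eq_matI simp: mat_diag_def)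
  show "mat_diag n u \<in> inv_mats n" by (rule inv_matsI[OF _ _ l r]) simp_all
  show "minv n (mat_diag n u) = mat_diag n w" by (rule minv_unique[OF _ _ l r]) simp_all
qed

lemma diag_equiv_scale_mat:
  assumes X: "X \<in> carrier_mat n n" and u: "\<forall>j<n. is_unit_r (u j)" and v: "\<forall>j<n. is_unit_r (v j)"
  shows "diag_equiv n X (scale_mat n u X v)"
proof -
  have "mat_diag n (\<lambda>j. rinv (u j)) \<in> inv_mats n" "minv n (mat_diag n (\<lambda>j. rinv (u j))) = mat_diag n u"
    using mat_diag_inverse[of n "\<lambda>j. rinv (u j)" u] u by (simp_all add: rinv_inverse)
  moreover have "mat_diag n v \<in> inv_mats n"
    using mat_diag_inverse[of n v "\<lambda>j. rinv (v j)"] v by (simp add: rinv_inverse)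
  moreover have "diagonal_mat (mat_diag n w)" for w :: "nat \<Rightarrow> 'a"
    unfolding diagonal_mat_def mat_diag_def by simp
  ultimately show ?thesis
    unfolding diag_equiv_def scale_mat_eq_mat_diag[OF X]
    by (intro exI[of _ "mat_diag n (\<lambda>j. rinv (u j))"] exI[of _ "mat_diag n v"]) simp
qed


lemma J2_carrier [simp]: "J2 n M \<in> carrier_mat n n"
  unfolding J2_def by simp

lemma J2_index [simp]: "j < n \<Longrightarrow> k < n \<Longrightarrow> J2 n M $$ (j,k) = rinv (M $$ (k,j))"
  unfolding J2_def by simp

lemma J2_unit_mats: "M \<in> unit_mats n \<Longrightarrow> J2 n M \<in> unit_mats n"
  unfolding unit_mats_def by simp

lemma J2_J2: "M \<in> unit_mats n \<Longrightarrow> J2 n (J2 n M) = M"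
  by (rule eq_matI) (auto simp: unit_mats_def J2_def)

lemma J2_hat_mats_iff: "M \<in> unit_mats n \<Longrightarrow> J2 n M \<in> hat_mats n \<longleftrightarrow> M \<in> hat_mats n"
  unfolding hat_mats_def unit_mats_def by (auto simp: rinv_eq_one_iff)

lemma dom_Phi_iff:
  "A \<in> dom_Phi n \<longleftrightarrow> A \<in> inv_mats n \<and> minv n A \<in> unit_mats n \<and> A \<in> hat_mats n \<and> A \<in> unit_mats n"
  unfolding dom_Phi_def dom_J_def J1_def by auto

lemma dom_Phi_inv_iff: "A \<in> dom_Phi_inv n \<longleftrightarrow> A \<in> unit_mats n \<and> J2 n A \<in> dom_Phi n"
  unfolding dom_Phi_inv_def dom_Jinv_def Jinv_def J1_def dom_Phi_iff
  by (auto simp: J2_unit_mats J2_hat_mats_iff)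

lemma bij_betw_J2: "bij_betw (J2 n) (dom_Phi_inv n) (dom_Phi n)"
  by (rule bij_betw_byWitness[where f' = "J2 n"])
    (auto simp: dom_Phi_inv_iff dom_Phi_iff J2_J2 J2_unit_mats)


lemma LambdaL_eq_scale_mat:
  "LambdaL n X = scale_mat n (\<lambda>j. X $$ (0,0) * rinv (X $$ (j,0))) X (\<lambda>k. rinv (X $$ (0,k)))"
  unfolding LambdaL_def scale_mat_def ..

lemma LambdaR_eq_scale_mat:
  "LambdaR n X = scale_mat n (\<lambda>j. rinv (X $$ (j,0))) X (\<lambda>k. rinv (X $$ (0,k)) * X $$ (0,0))"
  unfolding LambdaR_def scale_mat_def by (simp add: mult.assoc)

lemma LambdaL_unit_mats: "X \<in> unit_mats n \<Longrightarrow> LambdaL n X \<in> unit_mats n"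
  unfolding LambdaL_eq_scale_mat by (rule scale_mat_unit_mats) (auto simp: unit_mats_def)

lemma LambdaL_hat_mats: "X \<in> unit_mats n \<Longrightarrow> LambdaL n X \<in> hat_mats n"
  unfolding hat_mats_def unit_mats_def LambdaL_def by (auto simp: mult.assoc rinv_inverse)

lemma LambdaR_hat_mats: "X \<in> unit_mats n \<Longrightarrow> LambdaR n X \<in> hat_mats n"
  unfolding hat_mats_def unit_mats_def LambdaR_def by (auto simp: mult.assoc rinv_inverse)

lemma LambdaL_scale_mat_hat:
  assumes "X \<in> hat_mats n" "\<forall>j<n. is_unit_r (u j)" "\<forall>j<n. is_unit_r (v j)" "u 0 = 1"
  shows "LambdaL n (scale_mat n u X v) = X"
  using assms by (intro eq_matI) (auto simp: LambdaL_def hat_mats_def rinv_mult mult.assoc rinv_inverse)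

lemma LambdaR_scale_mat_hat:
  assumes "X \<in> hat_mats n" "\<forall>j<n. is_unit_r (u j)" "\<forall>j<n. is_unit_r (v j)" "v 0 = 1"
  shows "LambdaR n (scale_mat n u X v) = X"
  using assms by (intro eq_matI) (auto simp: LambdaR_def hat_mats_def rinv_mult mult.assoc rinv_inverse)

lemma LambdaL_eq_scale_mat_LambdaR:
  assumes "X \<in> unit_mats n" "0 < n"
  shows "LambdaL n X = scale_mat n (\<lambda>_. X $$ (0,0)) (LambdaR n X) (\<lambda>_. rinv (X $$ (0,0)))"
  using assms by (intro eq_matI) (auto simp: LambdaL_def LambdaR_def unit_mats_def mult.assoc rinv_inverse)


lemma
  assumes A: "A \<in> dom_Phi n" and n: "0 < n"
  shows Phi_mem_dom_Phi_inv: "Phi n A \<in> dom_Phi_inv n"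
    and Phi_inv_Phi: "Phi_inv n (Phi n A) = A"
proof -
  have Ai: "A \<in> inv_mats n" and B: "minv n A \<in> unit_mats n"
    and Ah: "A \<in> hat_mats n" and Au: "A \<in> unit_mats n"
    using A by (simp_all add: dom_Phi_iff)
  define u where "u j = minv n A $$ (0,0) * rinv (minv n A $$ (j,0))" for j
  define v where "v k = rinv (minv n A $$ (0,k))" for k
  have u: "\<forall>j<n. is_unit_r (u j)" and v: "\<forall>k<n. is_unit_r (v k)" and u0: "u 0 = 1"
    using B n by (auto simp: u_def v_def unit_mats_def rinv_inverse)
  define L where "L = LambdaL n (minv n A)"
  have L: "L = scale_mat n u (minv n A) v"
    unfolding L_def u_def v_def by (rule LambdaL_eq_scale_mat)
  have mL: "minv n L = scale_mat n (\<lambda>j. rinv (v j)) A (\<lambda>j. rinv (u j))"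
    using scale_mat_inverse(2)[OF minv_in_inv_mats[OF Ai] u v] unfolding L minv_minv[OF Ai] .
  have Lu: "L \<in> unit_mats n" unfolding L_def using B by (rule LambdaL_unit_mats)
  have "L \<in> dom_Phi n"
    unfolding dom_Phi_iff
    using Lu scale_mat_inverse(1)[OF minv_in_inv_mats[OF Ai] u v] LambdaL_hat_mats[OF B]
      scale_mat_unit_mats[OF Au] u v
    by (simp add: L_def[symmetric] L[symmetric] mL)
  moreover have Phi: "Phi n A = J2 n L" unfolding Phi_def L_def ..
  ultimately show "Phi n A \<in> dom_Phi_inv n"
    by (simp add: dom_Phi_inv_iff J2_J2 J2_unit_mats Lu)
  show "Phi_inv n (Phi n A) = A"
    unfolding Phi Phi_inv_def Jinv_def J1_def J2_J2[OF Lu] mL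
    by (rule LambdaR_scale_mat_hat[OF Ah]) (use u v u0 in simp_all)
qed

lemma
  assumes A: "A \<in> dom_Phi_inv n" and n: "0 < n"
  shows Phi_inv_mem_dom_Phi: "Phi_inv n A \<in> dom_Phi n"
    and Phi_Phi_inv: "Phi n (Phi_inv n A) = A"
proof -
  define C where "C = J2 n A"
  have Au: "A \<in> unit_mats n" and Ci: "C \<in> inv_mats n" and M: "minv n C \<in> unit_mats n"
    and Ch: "C \<in> hat_mats n" and Cu: "C \<in> unit_mats n"
    using A by (simp_all add: dom_Phi_inv_iff dom_Phi_iff C_def)
  define u where "u j = rinv (minv n C $$ (j,0))" for j
  define v where "v k = rinv (minv n C $$ (0,k)) * minv n C $$ (0,0)" for k
  have u: "\<forall>j<n. is_unit_r (u j)" and v: "\<forall>k<n. is_unit_r (v k)" and v0: "v 0 = 1"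
    using M n by (auto simp: u_def v_def unit_mats_def rinv_inverse)
  define R where "R = LambdaR n (minv n C)"
  have R: "R = scale_mat n u (minv n C) v"
    unfolding R_def u_def v_def by (rule LambdaR_eq_scale_mat)
  have mR: "minv n R = scale_mat n (\<lambda>j. rinv (v j)) C (\<lambda>j. rinv (u j))"
    using scale_mat_inverse(2)[OF minv_in_inv_mats[OF Ci] u v] unfolding R minv_minv[OF Ci] .
  have Phi_inv: "Phi_inv n A = R"
    unfolding Phi_inv_def Jinv_def J1_def R_def C_def ..
  show "Phi_inv n A \<in> dom_Phi n"
    unfolding Phi_inv dom_Phi_iff
    using scale_mat_inverse(1)[OF minv_in_inv_mats[OF Ci] u v] LambdaR_hat_mats[OF M]
      scale_mat_unit_mats[OF Cu] scale_mat_unit_mats[OF M u v] u v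
    by (simp add: R_def[symmetric] R[symmetric] mR)
  have "LambdaL n (minv n R) = C"
    unfolding mR by (rule LambdaL_scale_mat_hat[OF Ch]) (use u v v0 in simp_all)
  then show "Phi n (Phi_inv n A) = A"
    unfolding Phi_inv Phi_def using J2_J2[OF Au] by (simp add: C_def)
qed

lemma bij_betw_Phi: "0 < n \<Longrightarrow> bij_betw (Phi n) (dom_Phi n) (dom_Phi_inv n)"
  by (rule bij_betw_byWitness[where f' = "Phi_inv n"])
    (auto simp: Phi_mem_dom_Phi_inv Phi_inv_Phi Phi_inv_mem_dom_Phi Phi_Phi_inv)

lemma bij_betw_Phi_inv: "0 < n \<Longrightarrow> bij_betw (Phi_inv n) (dom_Phi_inv n) (dom_Phi n)"
  by (rule bij_betw_byWitness[where f' = "Phi n"])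
    (auto simp: Phi_mem_dom_Phi_inv Phi_inv_Phi Phi_inv_mem_dom_Phi Phi_Phi_inv)


lemma dom_Psi_eq_dom_Phi_inv:
  assumes "0 < n"
  shows "dom_Psi n = dom_Phi_inv n"
proof -
  have "Phi n (J2 n A) \<in> unit_mats n" if "J2 n A \<in> dom_Phi n" for A
    using Phi_mem_dom_Phi_inv[OF that assms] by (simp add: dom_Phi_inv_iff)
  then show ?thesis unfolding dom_Psi_def by (auto simp: dom_Phi_inv_iff)
qed

lemma Psi_eq_comp: "Psi n = J2 n \<circ> Phi n \<circ> J2 n"
  by (simp add: fun_eq_iff Psi_def)

lemma bij_betw_Psi: "0 < n \<Longrightarrow> bij_betw (Psi n) (dom_Phi_inv n) (dom_Phi n)"
  unfolding Psi_eq_comp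
  by (rule bij_betw_trans[OF bij_betw_J2 bij_betw_trans[OF bij_betw_Phi bij_betw_J2]])

lemma Psi_eq_LambdaL: "A \<in> dom_Phi_inv n \<Longrightarrow> Psi n A = LambdaL n (minv n (J2 n A))"
  unfolding Psi_def Phi_def
  by (simp add: J2_J2 LambdaL_unit_mats dom_Phi_inv_iff dom_Phi_iff)

lemma diag_equiv_Phi_inv_Psi:
  assumes A: "A \<in> dom_Phi_inv n" and n: "0 < n"
  shows "diag_equiv n (Phi_inv n A) (Psi n A)"
proof -
  define M where "M = minv n (J2 n A)"
  have M: "M \<in> unit_mats n" using A by (simp add: M_def dom_Phi_inv_iff dom_Phi_iff)
  then have "is_unit_r (M $$ (0,0))" using n by (simp add: unit_mats_def)
  then have "diag_equiv n (LambdaR n M) (LambdaL n M)"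
    unfolding LambdaL_eq_scale_mat_LambdaR[OF M n]
    by (intro diag_equiv_scale_mat) (simp_all add: LambdaR_def)
  then show ?thesis
    by (simp add: Psi_eq_LambdaL[OF A] Phi_inv_def Jinv_def J1_def M_def)
qed

theorem proposition4:
  fixes n :: nat
  assumes "n \<ge> 1"
  shows "dom_Psi n = (dom_Phi_inv n :: 'a::ring_1 mat set)
    \<and> bij_betw (Psi n) (dom_Psi n) (dom_Phi n :: 'a mat set)
    \<and> bij_betw (Phi_inv n) (dom_Phi_inv n) (dom_Phi n :: 'a mat set)
    \<and> (\<forall>A \<in> dom_Psi n. diag_equiv n (Phi_inv n A) (Psi n A :: 'a mat))"
proof -
  from assms have n: "0 < n" by simp
  show ?thesis
    unfolding dom_Psi_eq_dom_Phi_inv[OF n]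
    using bij_betw_Psi[OF n] bij_betw_Phi_inv[OF n] diag_equiv_Phi_inv_Psi[OF _ n] by blast
qed

end
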